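(* Let $\mathcal O$ be an order in a definite quaternion algebra $H$ over $\mathbb Q$. Then $e_d=0$ unless $d\equiv0\pmod{\omega(\mathcal O)}$.
   Context: $N$, $\mathrm{tr}$ reduced norm and trace; $\Delta(x)=\mathrm{tr}(x)^2-4N(x)$; $\omega(\mathcal O)=\gcd\{\Delta(x):x\in\mathcal O\}$ (positive). Left $\mathcal O$-ideals: lattices $\mathfrak a$ with $\mathfrak a\otimes\mathbb Z_q=\mathcal O_qx_q$, $x_q\in H_q^\times$, for all $q$; $\mathcal O_r(\mathfrak a)=\{x\in H:\mathfrak ax\subseteq\mathfrak a\}$; classes $[\mathfrak a]$ modulo $\mathfrak a\sim\mathfrak ax$, $x\in H^\times$; height pairing $\langle[\mathfrak a],[\mathfrak b]\rangle=\frac12\#\{x\in H^\times:\mathfrak ax=\mathfrak b\}$, $[\mathfrak a]^\vee=[\mathfrak a]/\langle[\mathfrak a],[\mathfrak a]\rangle$. For $d\ge0$ with $-d\equiv0,1\pmod 4$, $a_d([\mathfrak a])$ is the number of $\mathbb Z$-translation orbits of $\{x\in\mathcal O_r(\mathfrak a):\Delta(x)=-d\}$, $a_d=0$ otherwise; $e_d=\sum_{[\mathfrak a]}a_d([\mathfrak a])[\mathfrak a]^\vee$. *)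

theory Defs
  imports Complex_Main "HOL-Computational_Algebra.Primes"
begin

text \<open>The quaternion algebra H = (a,b)_Q over Q with basis 1,i,j,k,
  i^2 = a, j^2 = b, ij = -ji = k.  Elements are coordinate vectors.\<close>

datatype quat = Quat rat rat rat rat

fun qadd :: "quat \<Rightarrow> quat \<Rightarrow> quat" where
  "qadd (Quat x0 x1 x2 x3) (Quat y0 y1 y2 y3) = Quat (x0+y0) (x1+y1) (x2+y2) (x3+y3)"

fun qscal :: "rat \<Rightarrow> quat \<Rightarrow> quat" where
  "qscal c (Quat x0 x1 x2 x3) = Quat (c*x0) (c*x1) (c*x2) (c*x3)"

definition qzero :: quat where "qzero = Quat 0 0 0 0"
definition qone :: quat where "qone = Quat 1 0 0 0"
definition qof_int :: "int \<Rightarrow> quat" where "qof_int n = Quat (of_int n) 0 0 0"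

fun qmul :: "rat \<Rightarrow> rat \<Rightarrow> quat \<Rightarrow> quat \<Rightarrow> quat" where
  "qmul a b (Quat x0 x1 x2 x3) (Quat y0 y1 y2 y3) =
     Quat (x0*y0 + a*x1*y1 + b*x2*y2 - a*b*x3*y3)
          (x0*y1 + x1*y0 - b*x2*y3 + b*x3*y2)
          (x0*y2 + x2*y0 + a*x1*y3 - a*x3*y1)
          (x0*y3 + x3*y0 + x1*y2 - x2*y1)"

fun qtr :: "quat \<Rightarrow> rat" where "qtr (Quat x0 x1 x2 x3) = 2*x0"
fun qnrm :: "rat \<Rightarrow> rat \<Rightarrow> quat \<Rightarrow> rat" where
  "qnrm a b (Quat x0 x1 x2 x3) = x0^2 - a*x1^2 - b*x2^2 + a*b*x3^2"
definition qdisc :: "rat \<Rightarrow> rat \<Rightarrow> quat \<Rightarrow> rat" where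
  "qdisc a b x = (qtr x)^2 - 4 * qnrm a b x"

definition definite_quat_alg :: "rat \<Rightarrow> rat \<Rightarrow> bool" where
  "definite_quat_alg a b \<longleftrightarrow> a \<noteq> 0 \<and> b \<noteq> 0 \<and> (\<forall>x. x \<noteq> qzero \<longrightarrow> qnrm a b x > 0)"

definition lincomb :: "(nat \<Rightarrow> rat) \<Rightarrow> (nat \<Rightarrow> quat) \<Rightarrow> quat" where
  "lincomb c v = qadd (qadd (qadd (qscal (c 0) (v 0)) (qscal (c 1) (v 1)))
                            (qscal (c 2) (v 2))) (qscal (c 3) (v 3))"

definition is_lattice :: "quat set \<Rightarrow> bool" where
  "is_lattice L \<longleftrightarrow> (\<exists>v. (\<forall>c. lincomb c v = qzero \<longrightarrow> (\<forall>i<4. c i = 0)) \<and>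
                        L = {lincomb (\<lambda>i. of_int (n i)) v | n. True})"

definition is_order :: "rat \<Rightarrow> rat \<Rightarrow> quat set \<Rightarrow> bool" where
  "is_order a b Ord \<longleftrightarrow> is_lattice Ord \<and> qone \<in> Ord \<and> (\<forall>x\<in>Ord. \<forall>y\<in>Ord. qmul a b x y \<in> Ord)"

definition qunit :: "rat \<Rightarrow> rat \<Rightarrow> quat \<Rightarrow> bool" where
  "qunit a b x \<longleftrightarrow> (\<exists>y. qmul a b x y = qone \<and> qmul a b y x = qone)"

definition rmul :: "rat \<Rightarrow> rat \<Rightarrow> quat set \<Rightarrow> quat \<Rightarrow> quat set" where
  "rmul a b A x = (\<lambda>y. qmul a b y x) ` A"

text \<open>Localization Z_(q) \<otimes> L = {y/s : y \<in> L, s \<in> Z, q \<not> | s}.\<close>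
definition loc :: "int \<Rightarrow> quat set \<Rightarrow> quat set" where
  "loc q L = {qscal (1 / of_int s) y | s y. y \<in> L \<and> \<not> q dvd s}"

definition left_ideal :: "rat \<Rightarrow> rat \<Rightarrow> quat set \<Rightarrow> quat set \<Rightarrow> bool" where
  "left_ideal a b Ord A \<longleftrightarrow> is_lattice A \<and>
     (\<forall>q::int. prime q \<longrightarrow> (\<exists>x. qunit a b x \<and> loc q A = rmul a b (loc q Ord) x))"

definition right_order :: "rat \<Rightarrow> rat \<Rightarrow> quat set \<Rightarrow> quat set" where
  "right_order a b A = {x. \<forall>y\<in>A. qmul a b y x \<in> A}"

definition ideal_class :: "rat \<Rightarrow> rat \<Rightarrow> quat set \<Rightarrow> quat set \<Rightarrow> quat set set" where
  "ideal_class a b Ord A = {B. left_ideal a b Ord B \<and> (\<exists>x. qunit a b x \<and> B = rmul a b A x)}"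

definition ideal_classes :: "rat \<Rightarrow> rat \<Rightarrow> quat set \<Rightarrow> quat set set set" where
  "ideal_classes a b Ord = {ideal_class a b Ord A | A. left_ideal a b Ord A}"

definition height :: "rat \<Rightarrow> rat \<Rightarrow> quat set \<Rightarrow> quat set \<Rightarrow> rat" where
  "height a b A B = of_nat (card {x. qunit a b x \<and> rmul a b A x = B}) / 2"

definition omega :: "rat \<Rightarrow> rat \<Rightarrow> quat set \<Rightarrow> int" where
  "omega a b Ord = Gcd {k. \<exists>x\<in>Ord. qdisc a b x = of_int k}"

definition a_coef :: "rat \<Rightarrow> rat \<Rightarrow> nat \<Rightarrow> quat set \<Rightarrow> nat" where
  "a_coef a b d A =
    (if d mod 4 = 0 \<or> d mod 4 = 3 then
       (let S = {x \<in> right_order a b A. qdisc a b x = - of_nat d}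
        in card (S // {(x,y). x \<in> S \<and> y \<in> S \<and> (\<exists>n. y = qadd x (qof_int n))}))
     else 0)"

text \<open>e_d = \<Sum>_[A] a_d([A]) [A]^\<vee>, with [A]^\<vee> = [A]/\<langle>[A],[A]\<rangle>, represented by its
  coefficient function on ideal classes (zero off the set of classes).\<close>
definition e_vec :: "rat \<Rightarrow> rat \<Rightarrow> quat set \<Rightarrow> nat \<Rightarrow> quat set set \<Rightarrow> rat" where
  "e_vec a b Ord d C =
    (if C \<in> ideal_classes a b Ord then
       (let A = (SOME A. A \<in> C) in of_nat (a_coef a b d A) / height a b A A)
     else 0)"

end

theory Submission imports Defs begin

text \<open>Let \<open>y \<in> O\<^sub>r(A)\<close> with \<open>\<Delta>(y) = -d\<close> and fix a prime q. Locally \<open>A\<^sub>q = O\<^sub>q x\<close>, so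
  \<open>x y \<in> A\<^sub>q\<close> gives \<open>x y = w x\<close> with \<open>w \<in> O\<^sub>q\<close>; as \<open>\<Delta>\<close> is invariant under conjugation,
  \<open>-d = \<Delta>(w) = \<Delta>(z)/s\<^sup>2\<close> for some \<open>z \<in> O\<close> and some s prime to q. Hence \<open>\<omega>(O)\<close> divides
  \<open>d s\<^sup>2\<close> with s prime to q, for every q, and therefore divides d. So \<open>a\<^sub>d\<close> vanishes on every
  class and \<open>e\<^sub>d = 0\<close>.\<close>

lemma qmul_assoc: "qmul a b (qmul a b x y) z = qmul a b x (qmul a b y z)"
proof (cases x; cases y; cases z)
  fix x0 x1 x2 x3 y0 y1 y2 y3 z0 z1 z2 z3
  assume xyz: "x = Quat x0 x1 x2 x3" "y = Quat y0 y1 y2 y3" "z = Quat z0 z1 z2 z3"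
  show ?thesis
    unfolding xyz qmul.simps quat.inject by (intro conjI; algebra)
qed

lemma qnrm_qmul: "qnrm a b (qmul a b x y) = qnrm a b x * qnrm a b y"
proof (cases x; cases y)
  fix x0 x1 x2 x3 y0 y1 y2 y3
  assume xy: "x = Quat x0 x1 x2 x3" "y = Quat y0 y1 y2 y3"
  show ?thesis
    unfolding xy qmul.simps qnrm.simps by algebra
qed

lemma qmul_qone_left [simp]: "qmul a b qone x = x"
  by (cases x) (simp add: qone_def)

lemma qmul_qone_right [simp]: "qmul a b x qone = x"
  by (cases x) (simp add: qone_def)

lemma qscal_1 [simp]: "qscal 1 x = x"
  by (cases x) simp

lemma qnrm_qone [simp]: "qnrm a b qone = 1"
  by (simp add: qone_def)

lemma qtr_qmul_commute: "qtr (qmul a b x y) = qtr (qmul a b y x)"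
  by (cases x; cases y) (simp add: algebra_simps)

lemma qmul_qscal_left: "qmul a b (qscal c x) y = qscal c (qmul a b x y)"
  by (cases x; cases y) (simp add: algebra_simps)

lemma qdisc_qscal: "qdisc a b (qscal c x) = c\<^sup>2 * qdisc a b x"
  by (cases x) (simp add: qdisc_def algebra_simps power2_eq_square)

lemma qdisc_conjugate:
  assumes "qmul a b x x' = qone" and "qmul a b x' x = qone"
  shows "qdisc a b (qmul a b x' (qmul a b w x)) = qdisc a b w"
proof -
  have "qtr (qmul a b x' (qmul a b w x)) = qtr (qmul a b w (qmul a b x x'))"
    by (metis qtr_qmul_commute qmul_assoc)
  moreover have "qnrm a b (qmul a b x' (qmul a b w x)) = qnrm a b w * qnrm a b (qmul a b x' x)"
    by (simp add: qnrm_qmul)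
  ultimately show ?thesis
    using assms by (simp add: qdisc_def)
qed

lemma dvd_if_dvd_mult_prime_avoiding_power:
  fixes w d :: int
  assumes local_dvd: "\<And>q. prime q \<Longrightarrow> \<exists>s. \<not> q dvd s \<and> w dvd d * s ^ n"
  shows "w dvd d"
proof (cases "w = 0")
  case True
  obtain s where "\<not> 2 dvd s" and "w dvd d * s ^ n"
    using local_dvd[of 2] by auto
  with True show ?thesis by auto
next
  case False
  define g where "g = gcd w d"
  have "g \<noteq> 0" using False by (simp add: g_def)
  then obtain w' d' where w': "w = w' * g" and d': "d = d' * g" and coprime: "coprime w' d'"
    using gcd_coprime_exists unfolding g_def by blast
  have "is_unit w'"
  proof (rule ccontr)
    assume "\<not> is_unit w'"
    moreover have "w' \<noteq> 0" using False w' by auto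
    ultimately obtain q where q: "prime q" "q dvd w'"
      using prime_divisor_exists by blast
    then obtain s where s: "\<not> q dvd s" "w dvd d * s ^ n"
      using local_dvd by blast
    then have "w' * g dvd (d' * s ^ n) * g"
      unfolding w' d' by (simp add: ac_simps)
    then have "w' dvd s ^ n"
      using \<open>g \<noteq> 0\<close> coprime by (simp add: coprime_dvd_mult_right_iff)
    then have "q dvd s"
      using q prime_dvd_power dvd_trans by blast
    with s(1) show False by simp
  qed
  then have "w dvd g"
    unfolding w' by (simp add: mult_unit_dvd_iff)
  then show ?thesis
    unfolding g_def using dvd_trans gcd_dvd2 by blast
qed

lemma qdisc_mem_loc:
  assumes "w \<in> loc q L"
  obtains z s where "z \<in> L" and "\<not> q dvd s" and "qdisc a b z = qdisc a b w * (of_int s)\<^sup>2"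
proof -
  obtain s z where w: "w = qscal (1 / of_int s) z" and z: "z \<in> L" and s: "\<not> q dvd s"
    using assms unfolding loc_def by blast
  have "s \<noteq> 0" using s by auto
  with w have "qdisc a b z = qdisc a b w * (of_int s)\<^sup>2"
    by (simp add: qdisc_qscal field_simps)
  with z s that show ?thesis by blast
qed

lemma right_order_locally_conjugate_into_order:
  assumes ideal: "left_ideal a b Ord A" and y: "y \<in> right_order a b A"
    and q: "prime q" and one: "qone \<in> Ord"
  obtains x x' w where "qmul a b x x' = qone" and "qmul a b x' x = qone"
    and "w \<in> loc q Ord" and "y = qmul a b x' (qmul a b w x)"
proof -
  obtain x where "qunit a b x" and A_q: "loc q A = rmul a b (loc q Ord) x"
    using ideal q unfolding left_ideal_def by blast
  then obtain x' where inv: "qmul a b x x' = qone" "qmul a b x' x = qone"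
    unfolding qunit_def by blast
  have "\<not> q dvd 1"
    using q not_prime_unit by blast
  then have "qscal (1 / of_int 1) qone \<in> loc q Ord"
    using one unfolding loc_def by blast
  then have "qone \<in> loc q Ord"
    by simp
  then have "x \<in> loc q A"
    unfolding A_q rmul_def by force
  then obtain s x\<^sub>0 where x: "x = qscal (1 / of_int s) x\<^sub>0" "x\<^sub>0 \<in> A" "\<not> q dvd s"
    unfolding loc_def by blast
  have "qmul a b x\<^sub>0 y \<in> A"
    using y x(2) unfolding right_order_def by blast
  then have "qmul a b x y \<in> loc q A"
    unfolding loc_def using x by (auto simp: qmul_qscal_left)
  then obtain w where w: "w \<in> loc q Ord" and "qmul a b x y = qmul a b w x"
    unfolding A_q rmul_def by auto
  then have "y = qmul a b x' (qmul a b w x)"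
    by (metis inv(2) qmul_assoc qmul_qone_left)
  with inv w that show ?thesis by blast
qed

lemma omega_dvd_qdisc_right_order:
  assumes "qone \<in> Ord" and "left_ideal a b Ord A" and "y \<in> right_order a b A"
    and disc: "qdisc a b y = of_int k"
  shows "omega a b Ord dvd k"
proof (rule dvd_if_dvd_mult_prime_avoiding_power[where n = 2])
  fix q :: int
  assume "prime q"
  with assms obtain x x' w where "qmul a b x x' = qone" "qmul a b x' x = qone"
    and w: "w \<in> loc q Ord" and "y = qmul a b x' (qmul a b w x)"
    by (blast elim: right_order_locally_conjugate_into_order)
  then have w_disc: "qdisc a b w = of_int k"
    using disc qdisc_conjugate by metis
  obtain z s where z: "z \<in> Ord" and s: "\<not> q dvd s"
    and z_disc: "qdisc a b z = qdisc a b w * (of_int s)\<^sup>2"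
    using w by (rule qdisc_mem_loc)
  have "qdisc a b z = of_int (k * s\<^sup>2)"
    using z_disc w_disc by simp
  with z have "omega a b Ord dvd k * s\<^sup>2"
    unfolding omega_def by (blast intro: Gcd_dvd)
  with s show "\<exists>s. \<not> q dvd s \<and> omega a b Ord dvd k * s\<^sup>2" by blast
qed

lemma a_coef_eq_0_if_not_omega_dvd:
  assumes "qone \<in> Ord" and "left_ideal a b Ord A" and "\<not> omega a b Ord dvd int d"
  shows "a_coef a b d A = 0"
proof -
  have "{x \<in> right_order a b A. qdisc a b x = - of_nat d} = {}"
    using assms omega_dvd_qdisc_right_order[where k = "- int d"] by force
  then show ?thesis
    unfolding a_coef_def Let_def by (simp only: quotient_empty card.empty if_cancel)
qed

lemma mem_ideal_class_self: "left_ideal a b Ord A \<Longrightarrow> A \<in> ideal_class a b Ord A"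
  unfolding ideal_class_def qunit_def rmul_def by (auto intro: exI[of _ qone])

lemma left_ideal_some_mem_ideal_class:
  assumes "C \<in> ideal_classes a b Ord"
  shows "left_ideal a b Ord (SOME A. A \<in> C)"
proof -
  obtain A where "left_ideal a b Ord A" and C: "C = ideal_class a b Ord A"
    using assms unfolding ideal_classes_def by blast
  then have "A \<in> C"
    by (simp add: mem_ideal_class_self)
  then have "(SOME A. A \<in> C) \<in> C"
    by (rule someI)
  then show ?thesis
    unfolding C ideal_class_def by blast
qed

theorem corollary1:
  fixes a b :: rat and Ord :: "quat set" and d :: nat
  assumes "definite_quat_alg a b"
    and "is_order a b Ord"
    and "\<not> (omega a b Ord dvd int d)"
  shows "e_vec a b Ord d = (\<lambda>C. 0)"
proof
  fix C
  have "qone \<in> Ord"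
    using assms(2) unfolding is_order_def by blast
  then show "e_vec a b Ord d C = 0"
    using assms(3) left_ideal_some_mem_ideal_class a_coef_eq_0_if_not_omega_dvd
    unfolding e_vec_def by (simp add: Let_def)
qed

end
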